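(* Let $G_{12}$ be the graph with vertex set $\{1,\dots,12\}$ in which two distinct vertices are adjacent if and only if they both belong to one of the sets $\{1,4,7\}$, $\{2,4,5,6\}$, $\{2,4,6,7\}$, $\{2,4,6,9\}$, $\{2,4,9,12\}$, $\{2,5,8\}$, $\{2,6,7,11\}$, $\{2,11,12\}$, $\{3,6,9\}$, $\{4,5,6,10\}$, $\{4,10,12\}$, $\{6,10,11\}$, $\{10,11,12\}$. Then $G_{12}$ is weakly CIS.
   Context: A family $\mathcal C$ of maximal cliques is edge covering if every two adjacent vertices lie in a common member; a family $\mathcal S$ of maximal stable sets is non-edge covering if every two distinct non-adjacent vertices lie in a common member. A graph is weakly CIS if there are an edge covering family $\mathcal C$ of maximal cliques and a non-edge covering family $\mathcal S$ of maximal stable sets with $C\cap S\neq\emptyset$ for all $C\in\mathcal C$, $S\in\mathcal S$. *)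

theory Defs
  imports Main
begin

text \<open>A simple graph is given by a vertex set V and a symmetric irreflexive adjacency
  relation E (only its restriction to V matters).\<close>

definition clique :: "'a set \<Rightarrow> ('a \<Rightarrow> 'a \<Rightarrow> bool) \<Rightarrow> 'a set \<Rightarrow> bool" where
  "clique V E C \<longleftrightarrow> C \<subseteq> V \<and> (\<forall>x\<in>C. \<forall>y\<in>C. x \<noteq> y \<longrightarrow> E x y)"

definition stable_set :: "'a set \<Rightarrow> ('a \<Rightarrow> 'a \<Rightarrow> bool) \<Rightarrow> 'a set \<Rightarrow> bool" where
  "stable_set V E S \<longleftrightarrow> S \<subseteq> V \<and> (\<forall>x\<in>S. \<forall>y\<in>S. x \<noteq> y \<longrightarrow> \<not> E x y)"

definition maximal_clique :: "'a set \<Rightarrow> ('a \<Rightarrow> 'a \<Rightarrow> bool) \<Rightarrow> 'a set \<Rightarrow> bool" where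
  "maximal_clique V E C \<longleftrightarrow> clique V E C \<and> (\<forall>D. clique V E D \<and> C \<subseteq> D \<longrightarrow> D = C)"

definition maximal_stable_set :: "'a set \<Rightarrow> ('a \<Rightarrow> 'a \<Rightarrow> bool) \<Rightarrow> 'a set \<Rightarrow> bool" where
  "maximal_stable_set V E S \<longleftrightarrow> stable_set V E S \<and> (\<forall>T. stable_set V E T \<and> S \<subseteq> T \<longrightarrow> T = S)"

definition edge_covering :: "'a set \<Rightarrow> ('a \<Rightarrow> 'a \<Rightarrow> bool) \<Rightarrow> 'a set set \<Rightarrow> bool" where
  "edge_covering V E \<C> \<longleftrightarrow> (\<forall>C\<in>\<C>. maximal_clique V E C) \<and>
     (\<forall>x\<in>V. \<forall>y\<in>V. x \<noteq> y \<and> E x y \<longrightarrow> (\<exists>C\<in>\<C>. x \<in> C \<and> y \<in> C))"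

definition non_edge_covering :: "'a set \<Rightarrow> ('a \<Rightarrow> 'a \<Rightarrow> bool) \<Rightarrow> 'a set set \<Rightarrow> bool" where
  "non_edge_covering V E \<S> \<longleftrightarrow> (\<forall>S\<in>\<S>. maximal_stable_set V E S) \<and>
     (\<forall>x\<in>V. \<forall>y\<in>V. x \<noteq> y \<and> \<not> E x y \<longrightarrow> (\<exists>S\<in>\<S>. x \<in> S \<and> y \<in> S))"

definition weakly_CIS :: "'a set \<Rightarrow> ('a \<Rightarrow> 'a \<Rightarrow> bool) \<Rightarrow> bool" where
  "weakly_CIS V E \<longleftrightarrow> (\<exists>\<C> \<S>. edge_covering V E \<C> \<and> non_edge_covering V E \<S> \<and>
     (\<forall>C\<in>\<C>. \<forall>S\<in>\<S>. C \<inter> S \<noteq> {}))"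

definition G12_blocks :: "nat set list" where
  "G12_blocks = [{1,4,7}, {2,4,5,6}, {2,4,6,7}, {2,4,6,9}, {2,4,9,12}, {2,5,8},
     {2,6,7,11}, {2,11,12}, {3,6,9}, {4,5,6,10}, {4,10,12}, {6,10,11}, {10,11,12}]"

definition G12_V :: "nat set" where
  "G12_V = {1..12}"

definition G12_E :: "nat \<Rightarrow> nat \<Rightarrow> bool" where
  "G12_E x y \<longleftrightarrow> x \<noteq> y \<and> (\<exists>B\<in>set G12_blocks. x \<in> B \<and> y \<in> B)"

end

theory Submission
  imports Defs
begin

text \<open>The witnesses are seven maximal cliques covering all 30 edges and six maximal stable
  sets covering all 36 non-edges; each of the 42 clique/stable-set pairs meets.\<close>

lemma maximal_cliqueI:
  assumes "clique V E C" and "\<forall>v\<in>V. v \<notin> C \<longrightarrow> (\<exists>c\<in>C. \<not> E v c)"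
  shows "maximal_clique V E C"
  unfolding maximal_clique_def
proof (intro conjI allI impI)
  fix D assume D: "clique V E D \<and> C \<subseteq> D"
  show "D = C"
  proof (rule ccontr)
    assume "D \<noteq> C"
    then obtain v where v: "v \<in> D" "v \<notin> C" using D by blast
    then have "v \<in> V" using D unfolding clique_def by blast
    then obtain c where c: "c \<in> C" "\<not> E v c" using assms(2) v by blast
    then have "c \<in> D" "v \<noteq> c" using D v by auto
    then show False using D v(1) c(2) unfolding clique_def by blast
  qed
qed (rule assms(1))

lemma maximal_stable_setI:
  assumes "stable_set V E S" and "\<forall>v\<in>V. v \<notin> S \<longrightarrow> (\<exists>s\<in>S. E v s)"
  shows "maximal_stable_set V E S"
  unfolding maximal_stable_set_def
proof (intro conjI allI impI)
  fix T assume T: "stable_set V E T \<and> S \<subseteq> T"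
  show "T = S"
  proof (rule ccontr)
    assume "T \<noteq> S"
    then obtain v where v: "v \<in> T" "v \<notin> S" using T by blast
    then have "v \<in> V" using T unfolding stable_set_def by blast
    then obtain s where s: "s \<in> S" "E v s" using assms(2) v by blast
    then have "s \<in> T" "v \<noteq> s" using T v by auto
    then show False using T v(1) s(2) unfolding stable_set_def by blast
  qed
qed (rule assms(1))

lemma G12_V_eq: "G12_V = {1,2,3,4,5,6,7,8,9,10,11,12}"
  unfolding G12_V_def by (auto; arith)

lemma G12_E_table:
  "G12_E 1 y \<longleftrightarrow> y \<in> {4,7}"
  "G12_E 2 y \<longleftrightarrow> y \<in> {4,5,6,7,8,9,11,12}"
  "G12_E 3 y \<longleftrightarrow> y \<in> {6,9}"
  "G12_E 4 y \<longleftrightarrow> y \<in> {1,2,5,6,7,9,10,12}"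
  "G12_E 5 y \<longleftrightarrow> y \<in> {2,4,6,8,10}"
  "G12_E 6 y \<longleftrightarrow> y \<in> {2,3,4,5,7,9,10,11}"
  "G12_E 7 y \<longleftrightarrow> y \<in> {1,2,4,6,11}"
  "G12_E 8 y \<longleftrightarrow> y \<in> {2,5}"
  "G12_E 9 y \<longleftrightarrow> y \<in> {2,3,4,6,12}"
  "G12_E 10 y \<longleftrightarrow> y \<in> {4,5,6,11,12}"
  "G12_E 11 y \<longleftrightarrow> y \<in> {2,6,7,10,12}"
  "G12_E 12 y \<longleftrightarrow> y \<in> {2,4,9,10,11}"
  by (auto simp: G12_E_def G12_blocks_def)

text \<open>The simplifier normalises the vertex \<open>1\<close> to \<open>Suc 0\<close> in some goals, so the first row
  is also needed in that form.\<close>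

lemmas G12_E_simps = G12_E_table G12_E_table(1)[unfolded One_nat_def]

definition G12_cliques :: "nat set set" where
  "G12_cliques = {{1,4,7}, {2,5,8}, {3,6,9}, {10,11,12}, {2,4,9,12}, {2,6,7,11}, {4,5,6,10}}"

definition G12_stable_sets :: "nat set set" where
  "G12_stable_sets = {{1,2,3,10}, {1,5,9,11}, {1,6,8,12}, {3,4,8,11}, {3,5,7,12}, {7,8,9,10}}"

lemma G12_cliques_maximal: "\<forall>C\<in>G12_cliques. maximal_clique G12_V G12_E C"
proof -
  have "\<forall>C\<in>G12_cliques.
      clique G12_V G12_E C \<and> (\<forall>v\<in>G12_V. v \<notin> C \<longrightarrow> (\<exists>c\<in>C. \<not> G12_E v c))"
    by (simp add: G12_cliques_def clique_def G12_V_eq G12_E_simps)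
  then show ?thesis by (blast intro: maximal_cliqueI)
qed

lemma G12_stable_sets_maximal: "\<forall>S\<in>G12_stable_sets. maximal_stable_set G12_V G12_E S"
proof -
  have "\<forall>S\<in>G12_stable_sets.
      stable_set G12_V G12_E S \<and> (\<forall>v\<in>G12_V. v \<notin> S \<longrightarrow> (\<exists>s\<in>S. G12_E v s))"
    by (simp add: G12_stable_sets_def stable_set_def G12_V_eq G12_E_simps)
  then show ?thesis by (blast intro: maximal_stable_setI)
qed

lemma G12_cliques_edge_covering: "edge_covering G12_V G12_E G12_cliques"
  unfolding edge_covering_def
  using G12_cliques_maximal
  by (simp add: G12_V_eq G12_cliques_def G12_E_simps)

lemma G12_stable_sets_non_edge_covering: "non_edge_covering G12_V G12_E G12_stable_sets"
  unfolding non_edge_covering_def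
  using G12_stable_sets_maximal
  by (simp add: G12_V_eq G12_stable_sets_def G12_E_simps)

theorem proposition34:
  shows "weakly_CIS G12_V G12_E"
proof -
  have "\<forall>C\<in>G12_cliques. \<forall>S\<in>G12_stable_sets. C \<inter> S \<noteq> {}"
    unfolding G12_cliques_def G12_stable_sets_def by simp
  then show ?thesis
    unfolding weakly_CIS_def
    using G12_cliques_edge_covering G12_stable_sets_non_edge_covering by blast
qed

end
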